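(* Let $\phi$ be an instance of \textsc{Max (2,3)-SAT} with $n$ variables and let $T_\phi$ be the tournament instance constructed from $\phi$ as described in the context. If $\phi$ admits an assignment that satisfies at least $k$ clauses, then $T_\phi$ has a seeding whose tournament value is at least $k+n$.
   Context: Tournament model: players form a finite set of size $2^{n'}$ totally ordered by strength (stronger beats weaker). A seeding is a bijection $\sigma$ from players to $[2^{n'}]$. In round $r=1,\dots,n'$, for each block of seed positions $\{(k-1)2^r+1,\dots,k2^r\}$, the winner $a$ of its first half $\{(k-1)2^r+1,\dots,(k-1)2^r+2^{r-1}\}$ plays the winner $b$ of its second half (a single-position block is won by the player seeded there), the stronger one wins the block, and the game has value $v(a,b,r)$. The tournament value is the sum of values of all games played. \textsc{Max (2,3)-SAT} instance: a CNF formula $\phi$ with variables $x_1,\dots,x_n$ and clauses $c_1,\dots,c_m$, each clause having exactly two literals and each variable appearing in at most three clauses; the occurrences of each variable $x$ as a literal are numbered $1,2,3$ (its $j$th appearance) in a fixed order. Construction of $T_\phi$: let $n'$ be the smallest integer with $16n\le 2^{n'}$ and $p=2^{n'}-16n$. Players: for each variable $x$, three variable players $x,x^T,x^F$; for each clause $c$, one clause player $c$; and dummy players $f_1,\dots,f_{13n+p-m}$. Strength order (strongest first): $x_1>x_1^T>x_1^F>x_2>x_2^T>x_2^F>\dots>x_n>x_n^T>x_n^F>c_1>\dots>c_m>f_1>\dots>f_{13n+p-m}$. Game values: for each variable $x$, $v(x,x^T,1)=v(x^T,x,1)=v(x,x^F,1)=v(x^F,x,1)=1$; for each clause $c$ and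 each literal of $c$ that is the $j$th appearance of variable $x$, if $x$ appears non-negated there set $v(c,x^T,j)=v(x^T,c,j)=1$, and otherwise set $v(c,x^F,j)=v(x^F,c,j)=1$; all other values $v(a,b,r)$ for $r\in[n']$ are $0$. *)

theory Defs
  imports Main
begin

definition stronger :: "('p \<Rightarrow> nat) \<Rightarrow> 'p \<Rightarrow> 'p \<Rightarrow> 'p" where
  "stronger rank a b = (if rank a < rank b then a else b)"

definition is_seeding :: "'p set \<Rightarrow> nat \<Rightarrow> ('p \<Rightarrow> nat) \<Rightarrow> bool" where
  "is_seeding P N \<sigma> \<longleftrightarrow> bij_betw \<sigma> P {1..2^N}"

text \<open>winner P rank sigma r k: winner of the block of seed positions
  {(k-1)2^r+1 .. k 2^r} (k >= 1).\<close>

fun winner :: "'p set \<Rightarrow> ('p \<Rightarrow> nat) \<Rightarrow> ('p \<Rightarrow> nat) \<Rightarrow> nat \<Rightarrow> nat \<Rightarrow> 'p" where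
  "winner P rank \<sigma> 0 k = inv_into P \<sigma> k"
| "winner P rank \<sigma> (Suc r) k =
     stronger rank (winner P rank \<sigma> r (2*k - 1)) (winner P rank \<sigma> r (2*k))"

definition tournament_value ::
  "'p set \<Rightarrow> nat \<Rightarrow> ('p \<Rightarrow> nat) \<Rightarrow> ('p \<Rightarrow> 'p \<Rightarrow> nat \<Rightarrow> nat) \<Rightarrow> ('p \<Rightarrow> nat) \<Rightarrow> nat" where
  "tournament_value P N rank v \<sigma> =
     (\<Sum>r\<in>{1..N}. \<Sum>k\<in>{1..2^(N-r)}.
        v (winner P rank \<sigma> (r-1) (2*k-1)) (winner P rank \<sigma> (r-1) (2*k)) r)"

text \<open>Variables are 0..n-1.  A literal is (variable, positive?, occurrence number j);
  a clause is a pair of literals; a formula is a list of clauses.\<close>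

type_synonym lit = "nat \<times> bool \<times> nat"
type_synonym clause = "lit \<times> lit"

definition lit_var :: "lit \<Rightarrow> nat" where "lit_var l = fst l"
definition lit_pos :: "lit \<Rightarrow> bool" where "lit_pos l = fst (snd l)"
definition lit_occ :: "lit \<Rightarrow> nat" where "lit_occ l = snd (snd l)"

definition clause_lit :: "clause \<Rightarrow> nat \<Rightarrow> lit" where
  "clause_lit c i = (if i = 0 then fst c else snd c)"

text \<open>Well-formed instance: every literal uses a variable < n with occurrence number in
  {1,2,3}, and the occurrence numbers of each variable are distinct across all literal
  positions (so each variable occurs at most three times, numbered 1,2,3 in a fixed order).\<close>

definition wf_23sat :: "nat \<Rightarrow> clause list \<Rightarrow> bool" where
  "wf_23sat n cls \<longleftrightarrow>
     (\<forall>c<length cls. \<forall>i<2. lit_var (clause_lit (cls!c) i) < n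
                        \<and> lit_occ (clause_lit (cls!c) i) \<in> {1,2,3}) \<and>
     (\<forall>c<length cls. \<forall>i<2. \<forall>c'<length cls. \<forall>i'<2.
        lit_var (clause_lit (cls!c) i) = lit_var (clause_lit (cls!c') i') \<and>
        lit_occ (clause_lit (cls!c) i) = lit_occ (clause_lit (cls!c') i')
        \<longrightarrow> c = c' \<and> i = i')"

definition lit_sat :: "(nat \<Rightarrow> bool) \<Rightarrow> lit \<Rightarrow> bool" where
  "lit_sat a l \<longleftrightarrow> a (lit_var l) = lit_pos l"

definition num_sat :: "(nat \<Rightarrow> bool) \<Rightarrow> clause list \<Rightarrow> nat" where
  "num_sat a cls = card {c. c < length cls \<and>
       (lit_sat a (clause_lit (cls!c) 0) \<or> lit_sat a (clause_lit (cls!c) 1))}"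

datatype player = VarP nat | VarT nat | VarF nat | ClP nat | Dummy nat

definition nprime :: "nat \<Rightarrow> nat" where
  "nprime n = (LEAST n'. 16 * n \<le> 2 ^ n')"

definition padp :: "nat \<Rightarrow> nat" where
  "padp n = 2 ^ nprime n - 16 * n"

definition T_players :: "nat \<Rightarrow> clause list \<Rightarrow> player set" where
  "T_players n cls =
     VarP ` {..<n} \<union> VarT ` {..<n} \<union> VarF ` {..<n} \<union> ClP ` {..<length cls}
     \<union> Dummy ` {..<13 * n + padp n - length cls}"

fun T_rank :: "nat \<Rightarrow> clause list \<Rightarrow> player \<Rightarrow> nat" where
  "T_rank n cls (VarP i) = 3 * i"
| "T_rank n cls (VarT i) = 3 * i + 1"
| "T_rank n cls (VarF i) = 3 * i + 2"
| "T_rank n cls (ClP j) = 3 * n + j"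
| "T_rank n cls (Dummy l) = 3 * n + length cls + l"

definition T_edge :: "clause list \<Rightarrow> player \<Rightarrow> player \<Rightarrow> nat \<Rightarrow> bool" where
  "T_edge cls a b r \<longleftrightarrow>
     (\<exists>x. r = 1 \<and> a = VarP x \<and> (b = VarT x \<or> b = VarF x)) \<or>
     (\<exists>c<length cls. \<exists>i<2. a = ClP c \<and>
        r = lit_occ (clause_lit (cls!c) i) \<and>
        b = (if lit_pos (clause_lit (cls!c) i) then VarT (lit_var (clause_lit (cls!c) i))
             else VarF (lit_var (clause_lit (cls!c) i))))"

definition T_value :: "clause list \<Rightarrow> player \<Rightarrow> player \<Rightarrow> nat \<Rightarrow> nat" where
  "T_value cls a b r = (if T_edge cls a b r \<or> T_edge cls b a r then 1 else 0)"

end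

theory Submission
  imports Defs
begin

(*
  Seeds 1 .. 16n are cut into 2n octets of eight consecutive seeds, one per literal; the
  literal players x^T and x^F take the first seed of the octets of x and of not-x.  Player x
  takes the second seed of the octet of the literal falsified by the assignment and beats that
  literal player in round 1: n games of value 1.  A satisfied clause whose true literal is the
  j-th occurrence of x takes offset 2^(j-1) in the octet of that literal.  This octet contains
  no player x, and its other clauses sit at offsets 2^(j'-1) for other occurrences j', so the
  literal player wins the first 2^(j-1) seeds, the clause wins the next 2^(j-1), and the two
  meet in round j.  These games are pairwise distinct, and the dummies, filling all remaining
  seeds, are weaker than everybody else.
*)

definition seed_block :: "nat \<Rightarrow> nat \<Rightarrow> nat set" where
  "seed_block r k = {(k - 1) * 2 ^ r + 1 .. k * 2 ^ r}"

lemma seed_block_Suc: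
  assumes "1 \<le> k"
  shows "seed_block (Suc r) k = seed_block r (2 * k - 1) \<union> seed_block r (2 * k)"
proof -
  obtain t where k: "k = Suc t" using assms by (cases k) auto
  define q :: nat where "q = 2 ^ r"
  have "seed_block (Suc r) k = {2 * t * q + 1 .. (2 * t + 2) * q}"
    and "seed_block r (2 * k - 1) = {2 * t * q + 1 .. (2 * t + 1) * q}"
    and "seed_block r (2 * k) = {(2 * t + 1) * q + 1 .. (2 * t + 2) * q}"
    by (simp_all add: seed_block_def k q_def algebra_simps)
  moreover have "2 * t * q \<le> (2 * t + 1) * q" "(2 * t + 1) * q \<le> (2 * t + 2) * q"
    by simp_all
  ultimately show ?thesis by auto
qed

lemma winner_strongest_in_block:
  assumes \<sigma>: "is_seeding P N \<sigma>" and k: "1 \<le> k" "k * 2 ^ r \<le> 2 ^ N"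
  shows "winner P rank \<sigma> r k \<in> P \<and> \<sigma> (winner P rank \<sigma> r k) \<in> seed_block r k
    \<and> (\<forall>p\<in>P. \<sigma> p \<in> seed_block r k \<longrightarrow> rank (winner P rank \<sigma> r k) \<le> rank p)"
  using k
proof (induction r arbitrary: k)
  case 0
  then have "k \<in> \<sigma> ` P" and "inj_on \<sigma> P"
    using \<sigma> by (auto simp: is_seeding_def bij_betw_def)
  moreover have "seed_block 0 k = {k}"
    using 0 by (auto simp: seed_block_def)
  ultimately show ?case
    by (auto simp: inv_into_into f_inv_into_f dest: inj_onD)
next
  case (Suc r)
  have "1 \<le> 2 * k - 1" "(2 * k - 1) * 2 ^ r \<le> 2 ^ N" "1 \<le> 2 * k" "(2 * k) * 2 ^ r \<le> 2 ^ N"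
    using Suc.prems by (auto simp: algebra_simps)
  with Suc.IH[of "2 * k - 1"] Suc.IH[of "2 * k"] show ?case
    unfolding winner.simps seed_block_Suc[OF Suc.prems(1)] stronger_def by fastforce
qed

lemma winner_eqI:
  assumes "is_seeding P N \<sigma>" "1 \<le> k" "k * 2 ^ r \<le> 2 ^ N"
    and "q \<in> P" "\<sigma> q \<in> seed_block r k"
    and "\<And>p. p \<in> P \<Longrightarrow> \<sigma> p \<in> seed_block r k \<Longrightarrow> p = q \<or> rank q < rank p"
  shows "winner P rank \<sigma> r k = q"
  using winner_strongest_in_block[OF assms(1-3), of rank] assms(4-) by force

definition games :: "nat \<Rightarrow> (nat \<times> nat) set" where
  "games N = Sigma {1..N} (\<lambda>r. {1..2 ^ (N - r)})"

definition game_value :: "'p set \<Rightarrow> ('p \<Rightarrow> nat) \<Rightarrow> ('p \<Rightarrow> 'p \<Rightarrow> nat \<Rightarrow> nat) \<Rightarrow>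
    ('p \<Rightarrow> nat) \<Rightarrow> nat \<Rightarrow> nat \<Rightarrow> nat" where
  "game_value P rank v \<sigma> r k =
     v (winner P rank \<sigma> (r - 1) (2 * k - 1)) (winner P rank \<sigma> (r - 1) (2 * k)) r"

lemma card_le_tournament_value:
  assumes "G \<subseteq> games N" and "\<And>r k. (r, k) \<in> G \<Longrightarrow> 1 \<le> game_value P rank v \<sigma> r k"
  shows "card G \<le> tournament_value P N rank v \<sigma>"
proof -
  have "card G = (\<Sum>(r, k)\<in>G. 1)" by simp
  also have "\<dots> \<le> (\<Sum>(r, k)\<in>G. game_value P rank v \<sigma> r k)"
    by (rule sum_mono) (use assms(2) in auto)
  also have "\<dots> \<le> (\<Sum>(r, k)\<in>games N. game_value P rank v \<sigma> r k)"
    by (rule sum_mono2) (use assms(1) in \<open>auto simp: games_def\<close>)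
  also have "\<dots> = tournament_value P N rank v \<sigma>"
    by (simp add: games_def tournament_value_def game_value_def sum.Sigma)
  finally show ?thesis .
qed

lemma ex_bij_betw_extending:
  assumes "finite A" "finite B" "card A = card B"
    and "Q \<subseteq> A" "inj_on f Q" "f ` Q \<subseteq> B"
  shows "\<exists>g. bij_betw g A B \<and> (\<forall>x\<in>Q. g x = f x)"
proof -
  have "card (A - Q) = card (B - f ` Q)"
    using assms by (simp add: card_Diff_subset card_image finite_subset)
  then obtain h where h: "bij_betw h (A - Q) (B - f ` Q)"
    using finite_same_card_bij assms(1,2) by blast
  define g where "g x = (if x \<in> Q then f x else h x)" for x
  have "bij_betw g Q (f ` Q)"
    using assms(5) by (simp add: g_def bij_betw_def inj_on_def)
  moreover have "bij_betw g (A - Q) (B - f ` Q)"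
    using h by (rule bij_betw_cong[THEN iffD1, rotated]) (simp add: g_def)
  ultimately have "bij_betw g (Q \<union> (A - Q)) (f ` Q \<union> (B - f ` Q))"
    by (rule bij_betw_combine) blast
  moreover have "Q \<union> (A - Q) = A" "f ` Q \<union> (B - f ` Q) = B"
    using assms(4,6) by auto
  ultimately show ?thesis
    by (auto simp: g_def)
qed

lemma seed_block_octet:
  assumes "(i + 1) * 2 ^ r \<le> (8::nat)"
  shows "seed_block r (d * 2 ^ (3 - r) + i + 1) = {8 * d + i * 2 ^ r + 1 .. 8 * d + (i + 1) * 2 ^ r}"
proof -
  have "(2::nat) ^ r \<le> 2 ^ 3" using assms by (simp add: algebra_simps)
  then have "r \<le> 3" using power_le_imp_le_exp[of "2::nat" r 3] by simp
  then have "(2::nat) ^ (3 - r) * 2 ^ r = 8"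
    by (simp flip: power_add)
  then show ?thesis
    by (simp add: seed_block_def algebra_simps)
qed

lemma octet_slot_in_block_iff:
  fixes d d' u i :: nat
  assumes "u < 8" "(i + 1) * 2 ^ r \<le> 8"
  shows "8 * d' + u + 1 \<in> {8 * d + i * 2 ^ r + 1 .. 8 * d + (i + 1) * 2 ^ r}
    \<longleftrightarrow> d' = d \<and> i * 2 ^ r \<le> u \<and> u < (i + 1) * 2 ^ r"
proof -
  have "d' = d" if "8 * d + i * 2 ^ r \<le> 8 * d' + u" "8 * d' + u < 8 * d + (i + 1) * 2 ^ r"
  proof -
    have "d' < d + 1" using that(2) assms by linarith
    moreover have "d < d' + 1" using that(1) assms by (simp add: algebra_simps)
    ultimately show ?thesis by simp
  qed
  then show ?thesis by auto
qed

(* In round j, block octet_block j d consists of the first 2^j seeds of octet d. *)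
definition octet_block :: "nat \<Rightarrow> nat \<Rightarrow> nat" where
  "octet_block j d = d * 2 ^ (3 - j) + 1"

lemma octet_block_eq_iff [simp]: "octet_block j d = octet_block j d' \<longleftrightarrow> d = d'"
  by (simp add: octet_block_def)

lemma le_two_power_nprime: "16 * n \<le> 2 ^ nprime n"
proof -
  have "16 * n \<le> 2 ^ (4 + n)" using less_exp[of n] by (simp add: power_add)
  then show ?thesis unfolding nprime_def by (rule LeastI)
qed

definition lit_octet :: "nat \<Rightarrow> bool \<Rightarrow> nat" where
  "lit_octet x b = 2 * x + (if b then 0 else 1)"

lemma lit_octet_eq_iff [simp]: "lit_octet x b = lit_octet y c \<longleftrightarrow> x = y \<and> b = c"
  unfolding lit_octet_def by (cases b; cases c) presburger+

definition lit_player :: "nat \<Rightarrow> bool \<Rightarrow> player" where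
  "lit_player x b = (if b then VarT x else VarF x)"

locale assignment_seeding =
  fixes n :: nat and cls :: "clause list" and a :: "nat \<Rightarrow> bool"
  assumes wf: "wf_23sat n cls"
begin

abbreviation "m \<equiv> length cls"
abbreviation "N \<equiv> nprime n"
abbreviation "players \<equiv> T_players n cls"
abbreviation "rk \<equiv> T_rank n cls"

definition chosen_idx :: "nat \<Rightarrow> nat" where
  "chosen_idx c = (if lit_sat a (clause_lit (cls ! c) 1) then 1 else 0)"

definition chosen :: "nat \<Rightarrow> lit" where
  "chosen c = clause_lit (cls ! c) (chosen_idx c)"

lemma lit_sat_chosen_iff:
  "lit_sat a (chosen c) \<longleftrightarrow>
     lit_sat a (clause_lit (cls ! c) 0) \<or> lit_sat a (clause_lit (cls ! c) 1)"
  by (auto simp: chosen_def chosen_idx_def)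

lemma chosen_wf: "c < m \<Longrightarrow> lit_var (chosen c) < n \<and> lit_occ (chosen c) \<in> {1, 2, 3}"
  using wf by (simp add: wf_23sat_def chosen_def chosen_idx_def)

lemma chosen_inj:
  assumes "c < m" "c' < m"
    and "lit_var (chosen c) = lit_var (chosen c')" "lit_occ (chosen c) = lit_occ (chosen c')"
  shows "c = c'"
proof -
  have "chosen_idx c < 2" "chosen_idx c' < 2" by (simp_all add: chosen_idx_def)
  with wf assms show ?thesis unfolding wf_23sat_def chosen_def by blast
qed

(* Unsatisfied clauses are parked at offsets 5 to 7, where they play no counted game. *)
definition clause_offset :: "nat \<Rightarrow> nat" where
  "clause_offset c =
     (if lit_sat a (chosen c) then 2 ^ (lit_occ (chosen c) - 1) else lit_occ (chosen c) + 4)"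

fun octet :: "player \<Rightarrow> nat" where
  "octet (VarP x) = lit_octet x (\<not> a x)"
| "octet (VarT x) = lit_octet x True"
| "octet (VarF x) = lit_octet x False"
| "octet (ClP c) = lit_octet (lit_var (chosen c)) (lit_pos (chosen c))"
| "octet (Dummy l) = 0"

fun offset :: "player \<Rightarrow> nat" where
  "offset (VarP x) = 1"
| "offset (VarT x) = 0"
| "offset (VarF x) = 0"
| "offset (ClP c) = clause_offset c"
| "offset (Dummy l) = 0"

definition seed_pos :: "player \<Rightarrow> nat" where
  "seed_pos p = 8 * octet p + offset p + 1"

definition placed :: "player set" where
  "placed = VarP ` {..<n} \<union> VarT ` {..<n} \<union> VarF ` {..<n} \<union> ClP ` {..<m}"

lemma octet_lit_player [simp]: "octet (lit_player x b) = lit_octet x b"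
  and offset_lit_player [simp]: "offset (lit_player x b) = 0"
  and lit_player_placed: "x < n \<Longrightarrow> lit_player x b \<in> placed"
  by (simp_all add: lit_player_def placed_def)

lemma clause_offset_bounds: "c < m \<Longrightarrow> 1 \<le> clause_offset c \<and> clause_offset c < 8"
  using chosen_wf[of c] by (auto simp: clause_offset_def)

lemma clause_offset_sat:
  "c < m \<Longrightarrow> lit_sat a (chosen c) \<Longrightarrow> clause_offset c = 2 ^ (lit_occ (chosen c) - 1)"
  by (simp add: clause_offset_def)

lemma clause_offset_eq_1: "c < m \<Longrightarrow> clause_offset c = 1 \<Longrightarrow> lit_sat a (chosen c)"
  by (auto simp: clause_offset_def split: if_splits)

lemma octet_less: "p \<in> placed \<Longrightarrow> octet p < 2 * n"
  by (fastforce simp: placed_def lit_octet_def dest: chosen_wf)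

lemma offset_less: "p \<in> placed \<Longrightarrow> offset p < 8"
  using clause_offset_bounds by (auto simp: placed_def)

lemma clause_place_inj:
  assumes "c < m" "c' < m" "octet (ClP c) = octet (ClP c')" "clause_offset c = clause_offset c'"
  shows "c = c'"
proof -
  have var: "lit_var (chosen c) = lit_var (chosen c')" and "lit_pos (chosen c) = lit_pos (chosen c')"
    using assms(3) by simp_all
  then have "lit_sat a (chosen c) = lit_sat a (chosen c')"
    by (simp add: lit_sat_def)
  then have "lit_occ (chosen c) = lit_occ (chosen c')"
    using assms(4) chosen_wf[OF assms(1)] chosen_wf[OF assms(2)]
    by (auto simp: clause_offset_def split: if_splits)
  with var show ?thesis using chosen_inj assms(1,2) by blast
qed

lemma place_inj:
  assumes "p \<in> placed" "p' \<in> placed" "octet p = octet p'" "offset p = offset p'"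
  shows "p = p'"
  using assms
proof (cases p; cases p')
qed (auto simp: placed_def lit_sat_def clause_place_inj
    dest: clause_offset_bounds clause_offset_eq_1)

lemma seed_pos_inj: "inj_on seed_pos placed"
proof
  fix p p' assume p: "p \<in> placed" and p': "p' \<in> placed" and "seed_pos p = seed_pos p'"
  then have "(8 * octet p + offset p) div 8 = (8 * octet p' + offset p') div 8"
    and "(8 * octet p + offset p) mod 8 = (8 * octet p' + offset p') mod 8"
    by (simp_all add: seed_pos_def)
  then have "octet p = octet p'" "offset p = offset p'"
    using offset_less[OF p] offset_less[OF p'] by simp_all
  with p p' show "p = p'" by (rule place_inj)
qed

lemma seed_pos_range: "p \<in> placed \<Longrightarrow> seed_pos p \<in> {1..16 * n}"
  using octet_less[of p] offset_less[of p] by (simp add: seed_pos_def)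

lemma card_placed: "card placed = 3 * n + m"
proof -
  have "card placed =
      card (VarP ` {..<n}) + card (VarT ` {..<n}) + card (VarF ` {..<n}) + card (ClP ` {..<m})"
    unfolding placed_def by (subst card_Un_disjoint, auto)+
  also have "\<dots> = 3 * n + m" by (simp add: card_image inj_on_def)
  finally show ?thesis .
qed

lemma players_eq: "players = placed \<union> Dummy ` {..<13 * n + padp n - m}"
  by (auto simp: T_players_def placed_def)

lemma card_players: "card players = 2 ^ N"
proof -
  have "card placed = card (seed_pos ` placed)"
    by (simp add: card_image seed_pos_inj)
  also have "\<dots> \<le> card {1..16 * n}"
    by (rule card_mono) (auto dest: seed_pos_range)
  finally have "3 * n + m \<le> 16 * n" by (simp add: card_placed)
  moreover have "placed \<inter> Dummy ` {..<13 * n + padp n - m} = {}"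
    by (auto simp: placed_def)
  then have "card players = card placed + (13 * n + padp n - m)"
    unfolding players_eq by (simp add: card_Un_disjoint placed_def card_image inj_on_def)
  ultimately show ?thesis
    using le_two_power_nprime[of n] by (simp add: card_placed padp_def)
qed

lemma ex_seeding_placed: "\<exists>\<sigma>. is_seeding players N \<sigma> \<and> (\<forall>p\<in>placed. \<sigma> p = seed_pos p)"
  unfolding is_seeding_def
proof (rule ex_bij_betw_extending)
  show "finite players" by (simp add: T_players_def)
  show "card players = card {1..(2::nat) ^ N}" by (simp add: card_players)
  show "seed_pos ` placed \<subseteq> {1..2 ^ N}"
    using seed_pos_range le_two_power_nprime[of n] by fastforce
qed (auto simp: players_eq seed_pos_inj)

lemma rank_placed_less: "p \<in> placed \<Longrightarrow> q \<in> players - placed \<Longrightarrow> rk p < rk q"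
  by (auto simp: placed_def players_eq)

lemma winner_in_octet:
  assumes \<sigma>: "is_seeding players N \<sigma>" "\<forall>p\<in>placed. \<sigma> p = seed_pos p"
    and i: "(i + 1) * 2 ^ r \<le> 8"
    and q: "q \<in> placed" "i * 2 ^ r \<le> offset q" "offset q < (i + 1) * 2 ^ r"
    and strongest: "\<And>p. p \<in> placed \<Longrightarrow> octet p = octet q \<Longrightarrow> i * 2 ^ r \<le> offset p \<Longrightarrow>
      offset p < (i + 1) * 2 ^ r \<Longrightarrow> p = q \<or> rk q < rk p"
  shows "winner players rk \<sigma> r (octet q * 2 ^ (3 - r) + i + 1) = q"
proof (rule winner_eqI[OF \<sigma>(1)])
  note block = seed_block_octet[OF i, of "octet q"]
  have "8 * octet q + 8 \<le> 16 * n" using octet_less[OF q(1)] by simp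
  then show "(octet q * 2 ^ (3 - r) + i + 1) * 2 ^ r \<le> 2 ^ N"
    using block i le_two_power_nprime[of n] by (simp add: seed_block_def)
  show "\<sigma> q \<in> seed_block r (octet q * 2 ^ (3 - r) + i + 1)"
    unfolding block using \<sigma>(2) q octet_slot_in_block_iff[OF offset_less[OF q(1)] i]
    by (simp add: seed_pos_def)
  fix p assume p: "p \<in> players" "\<sigma> p \<in> seed_block r (octet q * 2 ^ (3 - r) + i + 1)"
  show "p = q \<or> rk q < rk p"
  proof (cases "p \<in> placed")
    case True
    then show ?thesis
      using p \<sigma>(2) strongest octet_slot_in_block_iff[OF offset_less[OF True] i]
      unfolding block by (simp add: seed_pos_def)
  next
    case False
    then show ?thesis using rank_placed_less q(1) p(1) by blast
  qed
qed (use q in \<open>auto simp: players_eq\<close>)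

lemma first_game_in_octet:
  assumes \<sigma>: "is_seeding players N \<sigma>" "\<forall>p\<in>placed. \<sigma> p = seed_pos p"
    and j: "j \<in> {1, 2, 3}"
    and q: "q \<in> placed" "offset q < 2 ^ (j - 1)"
    and p: "p \<in> placed" "octet p = octet q" "2 ^ (j - 1) \<le> offset p" "offset p < 2 ^ j"
    and q_wins: "\<And>p'. p' \<in> placed \<Longrightarrow> octet p' = octet q \<Longrightarrow> offset p' < 2 ^ (j - 1) \<Longrightarrow>
      p' = q \<or> rk q < rk p'"
    and p_wins: "\<And>p'. p' \<in> placed \<Longrightarrow> octet p' = octet q \<Longrightarrow> 2 ^ (j - 1) \<le> offset p' \<Longrightarrow>
      offset p' < 2 ^ j \<Longrightarrow> p' = p \<or> rk p < rk p'"
  shows "(j, octet_block j (octet q)) \<in> games N"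
    and "game_value players rk (T_value cls) \<sigma> j (octet_block j (octet q)) = T_value cls q p j"
proof -
  have pow: "(2::nat) ^ (j - 1) * 2 = 2 ^ j" "(2::nat) ^ j \<le> 8"
    "2 * 2 ^ (3 - j) = (2::nat) ^ (3 - (j - 1))"
    using j by auto
  have bound: "8 * octet q + 8 \<le> 2 ^ N"
    using octet_less[OF q(1)] le_two_power_nprime[of n] by linarith
  have "(2::nat) ^ j \<le> 2 ^ N" using pow(2) bound by linarith
  then have "j \<le> N" using power_le_imp_le_exp[of "2::nat" j N] by simp
  moreover have "octet_block j (octet q) * 2 ^ j \<le> 2 ^ (N - j) * 2 ^ j"
    using bound pow \<open>j \<le> N\<close> j by (auto simp: octet_block_def algebra_simps simp flip: power_add)
  ultimately show "(j, octet_block j (octet q)) \<in> games N"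
    using j by (auto simp: games_def octet_block_def)
  have "winner players rk \<sigma> (j - 1) (octet q * 2 ^ (3 - (j - 1)) + 0 + 1) = q"
    by (rule winner_in_octet[OF \<sigma>]) (use pow q q_wins in auto)
  moreover have "winner players rk \<sigma> (j - 1) (octet p * 2 ^ (3 - (j - 1)) + 1 + 1) = p"
    by (rule winner_in_octet[OF \<sigma>]) (use pow p p_wins in auto)
  moreover have "2 * octet_block j (octet q) - 1 = octet q * 2 ^ (3 - (j - 1)) + 0 + 1"
    and "2 * octet_block j (octet q) = octet p * 2 ^ (3 - (j - 1)) + 1 + 1"
    using pow(3) p(2) by (simp_all add: octet_block_def algebra_simps flip: mult.assoc)
  ultimately show
    "game_value players rk (T_value cls) \<sigma> j (octet_block j (octet q)) = T_value cls q p j"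
    using j by (auto simp: game_value_def)
qed

lemma var_game_scores:
  assumes \<sigma>: "is_seeding players N \<sigma>" "\<forall>p\<in>placed. \<sigma> p = seed_pos p" and x: "x < n"
  shows "(1, octet_block 1 (octet (VarP x))) \<in> games N"
    and "game_value players rk (T_value cls) \<sigma> 1 (octet_block 1 (octet (VarP x))) = 1"
proof -
  let ?q = "lit_player x (\<not> a x)"
  have placed: "?q \<in> placed" "VarP x \<in> placed"
    using x lit_player_placed by (auto simp: placed_def)
  have q_wins: "p' = ?q \<or> rk ?q < rk p'"
    if "p' \<in> placed" "octet p' = octet ?q" "offset p' < 2 ^ (1 - 1)" for p'
    using that place_inj[OF that(1) placed(1)] by simp
  have p_wins: "p' = VarP x \<or> rk (VarP x) < rk p'"
    if "p' \<in> placed" "octet p' = octet ?q" "2 ^ (1 - 1) \<le> offset p'" "offset p' < 2 ^ 1" for p'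
    using that place_inj[OF that(1) placed(2)] by simp
  have "T_value cls ?q (VarP x) 1 = 1"
    by (auto simp: T_value_def T_edge_def lit_player_def)
  moreover note first_game_in_octet[where j = 1 and q = ?q and p = "VarP x",
      OF \<sigma> _ placed(1) _ placed(2) _ _ _ q_wins p_wins]
  ultimately show "(1, octet_block 1 (octet (VarP x))) \<in> games N"
    and "game_value players rk (T_value cls) \<sigma> 1 (octet_block 1 (octet (VarP x))) = 1"
    by simp_all
qed

lemma lit_player_strongest_in_octet:
  assumes "x < n" "p \<in> placed" "octet p = lit_octet x b" "p \<noteq> VarP x"
  shows "p = lit_player x b \<or> rk (lit_player x b) < rk p"
  using assms by (cases p) (auto simp: placed_def lit_player_def)

lemma offset_in_true_octet:
  assumes "p \<in> placed" "octet p = lit_octet x (a x)"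
  shows "offset p \<in> {0, 1, 2, 4}"
proof (cases p)
  case (ClP c)
  with assms have "c < m" "lit_sat a (chosen c)"
    by (auto simp: placed_def lit_sat_def)
  then show ?thesis
    using chosen_wf[OF \<open>c < m\<close>] ClP by (auto simp: clause_offset_sat)
qed (use assms in \<open>auto simp: placed_def\<close>)

lemma T_edge_chosen:
  assumes "c < m"
  shows "T_edge cls (ClP c) (lit_player (lit_var (chosen c)) (lit_pos (chosen c)))
    (lit_occ (chosen c))"
proof -
  have "chosen_idx c < 2" by (simp add: chosen_idx_def)
  with assms show ?thesis
    unfolding T_edge_def chosen_def lit_player_def
    by (intro disjI2 exI[of _ c] conjI exI[of _ "chosen_idx c"]) simp_all
qed

lemma clause_game_scores:
  assumes \<sigma>: "is_seeding players N \<sigma>" "\<forall>p\<in>placed. \<sigma> p = seed_pos p"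
    and c: "c < m" "lit_sat a (chosen c)"
  defines "j \<equiv> lit_occ (chosen c)"
  shows "(j, octet_block j (octet (ClP c))) \<in> games N"
    and "game_value players rk (T_value cls) \<sigma> j (octet_block j (octet (ClP c))) = 1"
proof -
  define x where "x = lit_var (chosen c)"
  let ?q = "lit_player x (a x)"
  have j: "j \<in> {1, 2, 3}" and "x < n"
    using chosen_wf[OF c(1)] by (simp_all add: j_def x_def)
  have octet: "octet (ClP c) = octet ?q"
    using c(2) by (simp add: x_def lit_sat_def)
  have placed: "?q \<in> placed" "ClP c \<in> placed"
    using \<open>x < n\<close> c(1) lit_player_placed by (auto simp: placed_def)
  have offset: "offset (ClP c) = 2 ^ (j - 1)"
    using clause_offset_sat[OF c] by (simp add: j_def)
  have q_wins: "p' = ?q \<or> rk ?q < rk p'"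
    if "p' \<in> placed" "octet p' = octet ?q" "offset p' < 2 ^ (j - 1)" for p'
  proof -
    have "p' \<noteq> VarP x" using that(2) by auto
    with that(1,2) show ?thesis by (simp add: lit_player_strongest_in_octet \<open>x < n\<close>)
  qed
  have p_wins: "p' = ClP c \<or> rk (ClP c) < rk p'"
    if "p' \<in> placed" "octet p' = octet ?q" "2 ^ (j - 1) \<le> offset p'" "offset p' < 2 ^ j" for p'
  proof -
    have "offset p' \<in> {0, 1, 2, 4}"
      using offset_in_true_octet[OF that(1)] that(2) by simp
    then have "offset p' = offset (ClP c)"
      using that(3,4) j offset by auto
    with that(1,2) octet show ?thesis by (simp add: place_inj[OF _ placed(2)])
  qed
  have "?q = lit_player (lit_var (chosen c)) (lit_pos (chosen c))"
    using c(2) by (simp add: x_def lit_sat_def)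
  then have "T_value cls ?q (ClP c) j = 1"
    using T_edge_chosen[OF c(1)] by (simp add: T_value_def j_def)
  moreover note first_game_in_octet[OF \<sigma> j placed(1) _ placed(2) octet _ _ q_wins p_wins]
  ultimately show "(j, octet_block j (octet (ClP c))) \<in> games N"
    and "game_value players rk (T_value cls) \<sigma> j (octet_block j (octet (ClP c))) = 1"
    using offset j octet by auto
qed

lemma num_sat_eq_card: "num_sat a cls = card {c. c < m \<and> lit_sat a (chosen c)}"
  by (simp add: num_sat_def lit_sat_chosen_iff)

theorem ex_seeding_value_ge:
  "\<exists>\<sigma>. is_seeding players N \<sigma> \<and>
     n + num_sat a cls \<le> tournament_value players N rk (T_value cls) \<sigma>"
proof -
  obtain \<sigma> where \<sigma>: "is_seeding players N \<sigma>" "\<forall>p\<in>placed. \<sigma> p = seed_pos p"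
    using ex_seeding_placed by blast
  define sat where "sat = {c. c < m \<and> lit_sat a (chosen c)}"
  define var_game_of where "var_game_of x = (1::nat, octet_block 1 (octet (VarP x)))" for x
  define clause_game_of where
    "clause_game_of c = (lit_occ (chosen c), octet_block (lit_occ (chosen c)) (octet (ClP c)))" for c
  have "inj_on var_game_of {..<n}"
    by (rule inj_onI) (simp add: var_game_of_def)
  moreover have "inj_on clause_game_of sat"
    by (rule inj_onI) (auto simp: clause_game_of_def sat_def intro: chosen_inj)
  moreover have "var_game_of ` {..<n} \<inter> clause_game_of ` sat = {}"
    by (auto simp: var_game_of_def clause_game_of_def sat_def lit_sat_def)
  ultimately have "n + num_sat a cls = card (var_game_of ` {..<n} \<union> clause_game_of ` sat)"
    by (simp add: card_Un_disjoint card_image num_sat_eq_card sat_def)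
  also have "\<dots> \<le> tournament_value players N rk (T_value cls) \<sigma>"
    by (rule card_le_tournament_value)
      (use var_game_scores[OF \<sigma>] clause_game_scores[OF \<sigma>]
        in \<open>auto simp: var_game_of_def clause_game_of_def sat_def\<close>)
  finally show ?thesis using \<sigma>(1) by blast
qed

end

theorem lemma1:
  fixes n :: nat and cls :: "clause list" and a :: "nat \<Rightarrow> bool" and k :: nat
  assumes "wf_23sat n cls"
    and "k \<le> num_sat a cls"
  shows "\<exists>\<sigma>. is_seeding (T_players n cls) (nprime n) \<sigma> \<and>
           k + n \<le> tournament_value (T_players n cls) (nprime n) (T_rank n cls) (T_value cls) \<sigma>"
proof -
  interpret assignment_seeding n cls a by unfold_locales (rule assms(1))
  from ex_seeding_value_ge assms(2) show ?thesis by fastforce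
qed

end
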